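(* In the setting below (with growth exponent $2$), assume $f(\cdot,\xi)$ is convex for all $\xi$ and that there is $L_{\mathrm Df,\mathcal U}>0$ with $\|\nabla g_\xi(u_2)-\nabla g_\xi(u_1)\|_{\mathcal U^*}\le L_{\mathrm Df,\mathcal U}\|u_2-u_1\|_{\mathcal U}$ for all $u_1,u_2\in\mathcal D(\psi)$, $\xi\in\Xi$. Then for all $N\in\mathbb N$, $$\mathbb E[G(u_N^* )-G(u^* )]\le\mathbb E[\Psi(u_N^* )]\le\Big(1+\Big(\frac1\theta+\frac{L_{\mathrm Df,\mathcal U}}{\theta^2}\Big)^2+\frac{4L_{\mathrm Df,\mathcal U}^2}{\theta^2}\Big)\frac{C_{\mathcal H;\mathcal U^*}^2\sigma_{\mathrm Df}^2}{N}.$$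
   Context: Let $U$ be a separable Hilbert space (identified with its dual, inner product $(\cdot,\cdot)_U$), $W$ a separable Banach space with dual $W^*$, and $B:U\to W$ a compact linear operator with adjoint $B^*$. Let $\psi:U\to[0,\infty]$ be proper, closed and convex with bounded domain $\mathcal D(\psi)=\{u:\psi(u)<\infty\}$. Let $U_0\subset U$ be open, convex and bounded with $\mathcal D(\psi)\subset U_0$. Let $\Xi$ be a complete separable metric space, $\boldsymbol\xi$ a $\Xi$-valued random element, and $\boldsymbol\xi^1,\boldsymbol\xi^2,\ldots$ i.i.d. copies of $\boldsymbol\xi$ on a complete probability space $(\Omega,\mathcal F,P)$. Let $f:B(U_0)\times\Xi\to\mathbb R$ be such that $f(\cdot,\xi)$ is continuous on $B(\mathcal D(\psi))$, $f(w,\cdot)$ is measurable, and $|f(Bu,\xi)|\le \zeta_f(\xi)$ on $U_0\times\Xi$ with $\zeta_f$ integrable. Assume: for each $\xi$, $g_\xi(u)=f(Bu,\xi)$ is continuously differentiable on $U_0$; there is a Carathéodory map $\mathrm D_wf:B(\mathcal D(\psi))\times\Xi\to W^*$ with $\nabla g_\xi(u)=B^*\mathrm D_wf(Bu,\xi)$ on $\mathcal D(\psi)\times\Xi$; there is an integrable $\zeta_{\mathrm Df}$ with $\|\nabla g_\xi(u)\|_U\le\zeta_{\mathrm Df}(\xi)$ on $U_0\times\Xi$ and $\|\mathrm D_wf(Bu,\xi)\|_{W^*}\le\zeta_{\mathrm Df}(\xi)$ on $\mathcal D(\psi)\times\Xi$. Let $F(w)=\mathbb E[f(w,\boldsymbol\xi)]$,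 $\mathrm DF(w)=\mathbb E[\mathrm D_wf(w,\boldsymbol\xi)]$, $G(u)=F(Bu)+\psi(u)$, $\hat F_N(w)=\frac1N\sum_{i=1}^Nf(w,\boldsymbol\xi^i)$, and $\Psi(u)=\sup_{v\in\mathcal D(\psi)}[(B^*\mathrm DF(Bu),u-v)_U+\psi(u)-\psi(v)]$ for $u\in\mathcal D(\psi)$. Let $u^*$ be a solution of $\min_{u\in U}G(u)$ and for each $N$ let $u_N^*:\Omega\to U$ be measurable with $u_N^*(\omega)$ a solution of $\min_{u\in U}\hat F_N(Bu,\omega)+\psi(u)$. Further assume: $\mathcal U$ is a Banach space with $\mathcal U^*\hookrightarrow U\hookrightarrow\mathcal U$, $\mathcal H$ is a separable Hilbert space with $\mathcal H\hookrightarrow\mathcal U^*$ (embedding constant $C_{\mathcal H;\mathcal U^*}$), and $|(v,u)_U|\le\|v\|_{\mathcal U^*}\|u\|_{\mathcal U}$ for all $v\in\mathcal U^*$, $u\in U$; there is $\theta>0$ with $(B^*\mathrm DF(Bu^* ),u-u^* )_U+\psi(u)-\psi(u^* )\ge\theta\|u-u^*\|_{\mathcal U}^{2}$ for all $u\in U$; the map $\xi\mapsto\nabla g_\xi(u^* )\in\mathcal H$ is integrable and $\sigma_{\mathrm Df}=(\mathbb E[\|\nabla g_{\boldsymbol\xi}(u^* )-\mathbb E[\nabla g_{\boldsymbol\xi}(u^* )]\|_{\mathcal H}^2])^{1/2}<\infty$. *)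

theory Defs
  imports "HOL-Probability.Probability"
begin

text \<open>Hilbert-space adjoint of a bounded linear operator B : U \<rightarrow> W, acting on W* (represented
  as bounded linear functionals 'w \<Rightarrow>L real), via the Riesz identification of U with its dual:
  (adj B phi, u)_U = phi (B u) for all u.\<close>
definition adj :: "('u::real_inner \<Rightarrow> 'w::real_normed_vector) \<Rightarrow> ('w \<Rightarrow>\<^sub>L real) \<Rightarrow> 'u" where
  "adj B phi = (THE v. \<forall>u. inner v u = blinfun_apply phi (B u))"

definition edom :: "('u \<Rightarrow> ereal) \<Rightarrow> 'u set" where
  "edom psi = {u. psi u < \<infinity>}"

definition compact_operator :: "('u::real_normed_vector \<Rightarrow> 'w::real_normed_vector) \<Rightarrow> bool" where
  "compact_operator B \<longleftrightarrow> bounded_linear B \<and> compact (closure (B ` ball 0 1))"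

definition proper_closed_convex :: "('u::real_normed_vector \<Rightarrow> ereal) \<Rightarrow> bool" where
  "proper_closed_convex psi \<longleftrightarrow>
     (\<exists>u. psi u < \<infinity>) \<and> (\<forall>u. psi u > -\<infinity>) \<and>
     closed {(u, c::real). psi u \<le> ereal c} \<and> convex {(u, c::real). psi u \<le> ereal c}"

definition Fexp :: "'om measure \<Rightarrow> ('om \<Rightarrow> 'x) \<Rightarrow> ('w \<Rightarrow> 'x \<Rightarrow> real) \<Rightarrow> 'w \<Rightarrow> real" where
  "Fexp P xi f w = (\<integral>om. f w (xi om) \<partial>P)"

text \<open>DF(w) = E[D_w f(w,xi)] in W*; the expectation of the W*-valued map is taken pointwise
  (Pettis / weak-star sense), which coincides with the Bochner integral whenever the latter exists.\<close>
definition DFexp :: "'om measure \<Rightarrow> ('om \<Rightarrow> 'x) \<Rightarrow> ('w::real_normed_vector \<Rightarrow> 'x \<Rightarrow> ('w \<Rightarrow>\<^sub>L real)) \<Rightarrow> 'w \<Rightarrow> ('w \<Rightarrow>\<^sub>L real)" where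
  "DFexp P xi Df w = Blinfun (\<lambda>z. \<integral>om. blinfun_apply (Df w (xi om)) z \<partial>P)"

definition Gobj :: "'om measure \<Rightarrow> ('om \<Rightarrow> 'x) \<Rightarrow> ('w \<Rightarrow> 'x \<Rightarrow> real) \<Rightarrow> ('u \<Rightarrow> 'w) \<Rightarrow> ('u \<Rightarrow> ereal) \<Rightarrow> 'u \<Rightarrow> ereal" where
  "Gobj P xi f B psi u = ereal (Fexp P xi f (B u)) + psi u"

definition Fhat :: "nat \<Rightarrow> (nat \<Rightarrow> 'om \<Rightarrow> 'x) \<Rightarrow> ('w \<Rightarrow> 'x \<Rightarrow> real) \<Rightarrow> 'w \<Rightarrow> 'om \<Rightarrow> real" where
  "Fhat N xis f w om = (1 / real N) * (\<Sum>i\<in>{1..N}. f w (xis i om))"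

definition Psi_crit :: "'om measure \<Rightarrow> ('om \<Rightarrow> 'x) \<Rightarrow> ('w::real_normed_vector \<Rightarrow> 'x \<Rightarrow> ('w \<Rightarrow>\<^sub>L real))
     \<Rightarrow> ('u::real_inner \<Rightarrow> 'w) \<Rightarrow> ('u \<Rightarrow> ereal) \<Rightarrow> 'u \<Rightarrow> ereal" where
  "Psi_crit P xi Df B psi u =
     (SUP v\<in>edom psi. ereal (inner (adj B (DFexp P xi Df (B u))) (u - v)) + psi u - psi v)"

end

theory Submission
  imports Defs
begin

(* Let u be the sample solution and e = ||grad F_N(ustar) - grad F(ustar)|| in the dual of the
  weak space. The first-order condition of the sample problem, tested against ustar, together
  with monotonicity of grad F_N (convexity of f) and the growth condition at ustar, gives
  theta ||u - ustar||^2 <= e ||u - ustar||, so ||u - ustar|| <= e / theta. Inserting this and the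
  Lipschitz bound on grad F into Psi(u) = sup_v [(grad F(u), u - v) + psi u - psi v], and
  absorbing the cross term by the growth at v, gives Psi(u) <= c e^2, while convexity of F gives
  G(u) - G(ustar) <= Psi(u). Finally e <= C_H ||h_N - E h||, where h_N is the sample mean of the
  H-valued gradients at ustar, and for independent samples E ||h_N - E h||^2 = sigma^2 / N since
  the cross terms vanish. *)

section \<open>Riesz representation\<close>

lemma parallelogram_law:
  fixes a b :: "'a::real_inner"
  shows "(norm (a + b))\<^sup>2 + (norm (a - b))\<^sup>2 = 2 * (norm a)\<^sup>2 + 2 * (norm b)\<^sup>2"
  unfolding power2_norm_eq_inner inner_add_left inner_add_right inner_diff_left inner_diff_right
  by (simp add: inner_commute[of b a])

lemma minimizing_sequence_Cauchy:
  fixes y :: "'a::real_inner"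
  assumes K: "convex K" and delta_le: "\<And>k. k \<in> K \<Longrightarrow> delta \<le> (norm (y - k))\<^sup>2"
    and ksK: "\<And>n. ks n \<in> K" and ks: "\<And>n. (norm (y - ks n))\<^sup>2 < delta + inverse (Suc n)"
  shows "Cauchy ks"
proof (rule metric_CauchyI)
  \<comment> \<open>The parallelogram law applied to y - ks n and y - ks m, with their midpoint in K.\<close>
  have close: "(norm (ks n - ks m))\<^sup>2 < 2 * inverse (Suc n) + 2 * inverse (Suc m)" for n m
  proof -
    have "(1/2) *\<^sub>R ks n + (1 - 1/2) *\<^sub>R ks m \<in> K"
      using ksK K by (intro convexD) auto
    then have "4 * delta \<le> (norm (2 *\<^sub>R (y - ((1/2) *\<^sub>R ks n + (1 - 1/2) *\<^sub>R ks m))))\<^sup>2"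
      by (auto dest!: delta_le simp: power2_eq_square)
    also have "2 *\<^sub>R (y - ((1/2) *\<^sub>R ks n + (1 - 1/2) *\<^sub>R ks m)) = (y - ks n) + (y - ks m)"
      by (simp add: algebra_simps scaleR_2)
    finally have "4 * delta \<le> (norm ((y - ks n) + (y - ks m)))\<^sup>2" .
    moreover have "(norm ((y - ks n) - (y - ks m)))\<^sup>2 = (norm (ks n - ks m))\<^sup>2"
      by (simp add: norm_minus_commute)
    ultimately show ?thesis
      using parallelogram_law[of "y - ks n" "y - ks m"] ks[of n] ks[of m] by linarith
  qed
  fix e :: real assume "e > 0"
  obtain M :: nat where M: "inverse (Suc M) < e\<^sup>2 / 4"
    using reals_Archimedean[of "e\<^sup>2 / 4"] \<open>e > 0\<close> by auto
  have "dist (ks m) (ks n) < e" if "M \<le> m" "M \<le> n" for m n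
  proof -
    have "inverse (Suc m) \<le> inverse (Suc M)" "inverse (Suc n) \<le> inverse (Suc M)"
      using that by (simp_all add: le_imp_inverse_le)
    then have "(norm (ks m - ks n))\<^sup>2 < e\<^sup>2"
      using close[of m n] M by linarith
    then show ?thesis
      using \<open>e > 0\<close> by (simp add: dist_norm power_less_imp_less_base)
  qed
  then show "\<exists>M. \<forall>m\<ge>M. \<forall>n\<ge>M. dist (ks m) (ks n) < e" by blast
qed

lemma nearest_point_exists:
  fixes y :: "'a::{real_inner, complete_space}"
  assumes K: "closed K" "convex K" "K \<noteq> {}"
  obtains p where "p \<in> K" "\<And>k. k \<in> K \<Longrightarrow> norm (y - p) \<le> norm (y - k)"
proof -
  define delta where "delta = (INF k\<in>K. (norm (y - k))\<^sup>2)"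
  have bdd: "bdd_below ((\<lambda>k. (norm (y - k))\<^sup>2) ` K)"
    by (auto intro: bdd_belowI[of _ 0])
  have delta_le: "delta \<le> (norm (y - k))\<^sup>2" if "k \<in> K" for k
    unfolding delta_def using bdd that by (rule cINF_lower)
  have "\<exists>k\<in>K. (norm (y - k))\<^sup>2 < delta + inverse (Suc n)" for n
    using cINF_less_iff[OF K(3) bdd, of "delta + inverse (Suc n)"] by (simp add: delta_def)
  then obtain ks where ksK: "\<And>n. ks n \<in> K" and ks: "\<And>n. (norm (y - ks n))\<^sup>2 < delta + inverse (Suc n)"
    by metis
  then have "Cauchy ks"
    using minimizing_sequence_Cauchy[OF K(2) delta_le] by blast
  then obtain p where lim: "ks \<longlonglongrightarrow> p" using convergent_eq_Cauchy by blast
  have pK: "p \<in> K" using closed_sequentially[OF K(1)] ksK lim by blast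
  have p_le: "(norm (y - p))\<^sup>2 \<le> delta"
  proof (rule LIMSEQ_le)
    show "(\<lambda>n. (norm (y - ks n))\<^sup>2) \<longlonglongrightarrow> (norm (y - p))\<^sup>2"
      by (intro tendsto_intros lim)
    show "(\<lambda>n. delta + inverse (Suc n)) \<longlonglongrightarrow> delta"
      using tendsto_add[OF tendsto_const LIMSEQ_inverse_real_of_nat, of delta] by simp
    show "\<exists>N. \<forall>n\<ge>N. (norm (y - ks n))\<^sup>2 \<le> delta + inverse (Suc n)"
      using ks by (intro exI[of _ 0] allI impI less_imp_le)
  qed
  show ?thesis
  proof (rule that[OF pK])
    fix k assume "k \<in> K"
    have "(norm (y - p))\<^sup>2 \<le> (norm (y - k))\<^sup>2"
      using p_le delta_le[OF \<open>k \<in> K\<close>] by (rule order_trans)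
    then show "norm (y - p) \<le> norm (y - k)"
      by (rule power2_le_imp_le) simp
  qed
qed

lemma nearest_point_subspace_orthogonal:
  fixes y :: "'a::real_inner"
  assumes K: "subspace K" and p: "p \<in> K" "\<And>k. k \<in> K \<Longrightarrow> norm (y - p) \<le> norm (y - k)"
    and k: "k \<in> K"
  shows "inner (y - p) k = 0"
proof (cases "k = 0")
  case False
  define w where "w = y - p"
  define t where "t = inner w k / inner k k"
  have kk: "inner k k > 0" using False by simp
  have "p + t *\<^sub>R k \<in> K" using K p(1) k by (simp add: subspace_add subspace_scale)
  then have "norm w \<le> norm (w - t *\<^sub>R k)"
    using p(2) by (simp add: w_def diff_diff_eq)
  then have "(norm w)\<^sup>2 \<le> (norm (w - t *\<^sub>R k))\<^sup>2"
    by (rule power_mono) simp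
  also have "\<dots> = (norm w)\<^sup>2 - (inner w k)\<^sup>2 / inner k k"
    using kk unfolding power2_norm_eq_inner t_def
    by (simp add: inner_diff_left inner_diff_right inner_commute[of k w] power2_eq_square field_simps)
  finally have "(inner w k)\<^sup>2 \<le> 0"
    using kk by (simp add: divide_le_0_iff)
  then show ?thesis by (simp add: w_def)
qed simp

lemma riesz_representation:
  fixes phi :: "'a::{real_inner, complete_space} \<Rightarrow> real"
  assumes phi: "bounded_linear phi"
  obtains v where "\<And>z. inner v z = phi z"
proof (cases "\<forall>z. phi z = 0")
  case True
  then show ?thesis by (intro that[of 0]) simp
next
  case False
  interpret phi: bounded_linear phi by fact
  define K where "K = {k. phi k = 0}"
  have "subspace K" unfolding K_def
    by (rule linear_subspace_kernel[OF phi.linear])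
  moreover have "closed K" unfolding K_def
    by (intro closed_Collect_eq continuous_intros phi.continuous_on)
  moreover obtain y where y: "phi y \<noteq> 0" using False by auto
  ultimately obtain p where p: "p \<in> K" "\<And>k. k \<in> K \<Longrightarrow> norm (y - p) \<le> norm (y - k)"
    using nearest_point_exists[of K y] subspace_imp_convex subspace_0 by blast
  define w where "w = y - p"
  have phiw: "phi w = phi y" using p(1) by (simp add: w_def K_def phi.diff)
  then have ww: "inner w w \<noteq> 0" using y by auto
  \<comment> \<open>w is orthogonal to the kernel, which contains z - (phi z / phi w) w.\<close>
  have "inner w z = (phi z / phi w) * inner w w" for z
  proof -
    have "z - (phi z / phi w) *\<^sub>R w \<in> K" using phiw y by (simp add: K_def phi.diff phi.scale)
    with \<open>subspace K\<close> p have "inner w (z - (phi z / phi w) *\<^sub>R w) = 0"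
      unfolding w_def by (rule nearest_point_subspace_orthogonal)
    then show ?thesis by (simp add: inner_diff_right)
  qed
  then show ?thesis
    using ww phiw y by (intro that[of "(phi w / inner w w) *\<^sub>R w"]) (simp add: field_simps)
qed

lemma inner_adj:
  fixes B :: "'u::{real_inner, complete_space} \<Rightarrow> 'w::real_normed_vector"
  assumes "bounded_linear B"
  shows "inner (adj B phi) z = blinfun_apply phi (B z)"
proof -
  have "bounded_linear (\<lambda>z. blinfun_apply phi (B z))"
    using assms by (rule bounded_linear_compose[OF blinfun.bounded_linear_right])
  then obtain v where v: "\<And>z. inner v z = blinfun_apply phi (B z)"
    using riesz_representation by blast
  have "adj B phi = v" unfolding adj_def
  proof (rule the_equality)
    show "\<forall>z. inner v z = blinfun_apply phi (B z)" using v by simp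
    show "v' = v" if "\<forall>z. inner v' z = blinfun_apply phi (B z)" for v'
      using that v by (intro vector_eq_rdot[THEN iffD1]) simp
  qed
  with v show ?thesis by simp
qed

section \<open>Bochner integrals under push-forward\<close>

text \<open>The library versions of these facts require a Banach space of values; the sample gradients
  take values in a Hilbert space given only as \<^class>\<open>real_inner\<close> and \<^class>\<open>polish_space\<close>.\<close>

lemma simple_bochner_integrable_comp_distr:
  fixes s :: "'b \<Rightarrow> 'c::{real_normed_vector, second_countable_topology}"
  assumes g: "g \<in> measurable M N"
    and s: "Bochner_Integration.simple_bochner_integrable (distr M N g) s"
  shows "Bochner_Integration.simple_bochner_integrable M (\<lambda>y. s (g y))"
    and "Bochner_Integration.simple_bochner_integral M (\<lambda>y. s (g y))
      = Bochner_Integration.simple_bochner_integral (distr M N g) s"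
proof -
  have sf: "simple_function N s"
    using s by (auto elim!: Bochner_Integration.simple_bochner_integrable.cases
        simp: simple_function_cong_algebra[of "distr M N g" N])
  have [measurable]: "s \<in> borel_measurable N"
    using sf by (rule borel_measurable_simple_function)
  have preimage: "g -` {z \<in> space N. Q z} \<inter> space M = {y \<in> space M. Q (g y)}" for Q
    using measurable_space[OF g] by auto
  have measure_eq: "measure (distr M N g) {z \<in> space N. s z = v} = measure M {y \<in> space M. s (g y) = v}"
    for v using measure_distr[OF g, of "{z \<in> space N. s z = v}"] unfolding preimage by simp
  have emeasure_eq: "emeasure (distr M N g) {z \<in> space N. s z \<noteq> 0} = emeasure M {y \<in> space M. s (g y) \<noteq> 0}"
    using emeasure_distr[OF g, of "{z \<in> space N. s z \<noteq> 0}"] unfolding preimage by simp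
  show "Bochner_Integration.simple_bochner_integrable M (\<lambda>y. s (g y))"
  proof
    show "simple_function M (\<lambda>y. s (g y))" by (rule simple_function_comp[OF g sf])
    show "emeasure M {y \<in> space M. s (g y) \<noteq> 0} \<noteq> \<infinity>"
      using s emeasure_eq by (auto elim!: Bochner_Integration.simple_bochner_integrable.cases)
  qed
  have "Bochner_Integration.simple_bochner_integral (distr M N g) s
      = (\<Sum>v\<in>s ` space N. measure M {y \<in> space M. s (g y) = v} *\<^sub>R v)"
    unfolding Bochner_Integration.simple_bochner_integral_def using measure_eq by simp
  also have "\<dots> = (\<Sum>v\<in>(\<lambda>y. s (g y)) ` space M. measure M {y \<in> space M. s (g y) = v} *\<^sub>R v)"
  proof (intro sum.mono_neutral_right ballI)
    fix v assume "v \<in> s ` space N - (\<lambda>y. s (g y)) ` space M"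
    then have "{y \<in> space M. s (g y) = v} = {}" by force
    then show "measure M {y \<in> space M. s (g y) = v} *\<^sub>R v = 0" by (metis measure_empty scale_zero_left)
  qed (use simple_functionD(1)[OF sf] measurable_space[OF g] in auto)
  finally show "Bochner_Integration.simple_bochner_integral M (\<lambda>y. s (g y))
      = Bochner_Integration.simple_bochner_integral (distr M N g) s"
    unfolding Bochner_Integration.simple_bochner_integral_def by simp
qed

lemma has_bochner_integral_comp_distr:
  fixes f :: "'b \<Rightarrow> 'c::{real_normed_vector, second_countable_topology}"
  assumes g: "g \<in> measurable M N" and f: "has_bochner_integral (distr M N g) f x"
  shows "has_bochner_integral M (\<lambda>y. f (g y)) x"
  using f
proof (cases rule: has_bochner_integral.cases)
  case (1 s)
  have "simple_function N (s i)" for i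
    using 1(2)[of i] by (auto elim!: Bochner_Integration.simple_bochner_integrable.cases
        simp: simple_function_cong_algebra[of "distr M N g" N])
  then have [measurable]: "f \<in> borel_measurable N" "s i \<in> borel_measurable N" for i
    using 1(1) by (auto intro: borel_measurable_simple_function)
  show ?thesis
  proof (rule has_bochner_integral.intros[where s="\<lambda>i y. s i (g y)"])
    show "(\<lambda>y. f (g y)) \<in> borel_measurable M" using g by measurable
    show "Bochner_Integration.simple_bochner_integrable M (\<lambda>y. s i (g y))" for i
      using g 1(2) by (rule simple_bochner_integrable_comp_distr)
    show "(\<lambda>i. \<integral>\<^sup>+y. norm (f (g y) - s i (g y)) \<partial>M) \<longlonglongrightarrow> 0"
      using 1(3) g by (simp add: nn_integral_distr)
    show "(\<lambda>i. Bochner_Integration.simple_bochner_integral M (\<lambda>y. s i (g y))) \<longlonglongrightarrow> x"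
      using 1(4) simple_bochner_integrable_comp_distr(2)[OF g 1(2)] by simp
  qed
qed

lemma integrable_comp_distr:
  fixes f :: "'b \<Rightarrow> 'c::{real_normed_vector, second_countable_topology}"
  assumes g: "g \<in> measurable M N" and f: "integrable (distr M N g) f"
  shows "integrable M (\<lambda>y. f (g y))" and "(\<integral>y. f (g y) \<partial>M) = integral\<^sup>L (distr M N g) f"
  using has_bochner_integral_comp_distr[OF g has_bochner_integral_integrable[OF f]]
  by (auto simp: has_bochner_integral_iff)

section \<open>Directional derivatives and convexity\<close>

lemma difference_quotient_along_line_tendsto:
  fixes g :: "'a::real_normed_vector \<Rightarrow> real"
  assumes g: "(g has_derivative g') (at u)"
  shows "((\<lambda>t. (g (u + t *\<^sub>R d) - g u) / t) \<longlongrightarrow> g' d) (at_right 0)"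
proof -
  interpret g': bounded_linear g' using g by (rule has_derivative_bounded_linear)
  have "((\<lambda>t. u + t *\<^sub>R d) has_derivative (\<lambda>s. s *\<^sub>R d)) (at 0)"
    by (auto intro!: derivative_eq_intros)
  from has_derivative_compose[OF this, of g g'] g
  have "((\<lambda>t. g (u + t *\<^sub>R d)) has_derivative (\<lambda>s. g' d * s)) (at 0)"
    by (simp add: g'.scaleR mult.commute)
  then have "((\<lambda>t. g (u + t *\<^sub>R d)) has_field_derivative g' d) (at 0)"
    by (simp add: has_field_derivative_def)
  then have "((\<lambda>t. (g (u + t *\<^sub>R d) - g u) / t) \<longlongrightarrow> g' d) (at 0)"
    by (simp add: DERIV_def)
  then show ?thesis by (simp add: filterlim_at_split)
qed

lemma directional_derivative_le:
  fixes g :: "'a::real_normed_vector \<Rightarrow> real"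
  assumes g: "(g has_derivative g') (at u)"
    and incr: "\<And>t. 0 < t \<Longrightarrow> t \<le> 1 \<Longrightarrow> g (u + t *\<^sub>R d) - g u \<le> t * c"
  shows "g' d \<le> c"
proof (rule tendsto_upperbound[OF difference_quotient_along_line_tendsto[OF g]])
  have "eventually (\<lambda>t. 0 < t \<and> t \<le> 1) (at_right (0::real))"
    by (auto simp: eventually_at_right_field intro!: exI[of _ 1])
  then show "\<forall>\<^sub>F t in at_right 0. (g (u + t *\<^sub>R d) - g u) / t \<le> c"
    by eventually_elim (use incr in \<open>auto simp: pos_divide_le_eq mult.commute\<close>)
qed simp

lemma directional_derivative_ge:
  fixes g :: "'a::real_normed_vector \<Rightarrow> real"
  assumes g: "(g has_derivative g') (at u)"
    and incr: "\<And>t. 0 < t \<Longrightarrow> t \<le> 1 \<Longrightarrow> t * c \<le> g (u + t *\<^sub>R d) - g u"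
  shows "c \<le> g' d"
  using directional_derivative_le[OF has_derivative_minus[OF g], of d "- c"] incr by force

lemma convex_on_above_tangent:
  fixes g :: "'a::real_normed_vector \<Rightarrow> real"
  assumes g: "convex_on S g" and u: "u \<in> S" and w: "w \<in> S"
    and d: "(g has_derivative g') (at u)"
  shows "g u + g' (w - u) \<le> g w"
proof -
  have "g' (w - u) \<le> g w - g u"
  proof (rule directional_derivative_le[OF d])
    fix t :: real assume "0 < t" "t \<le> 1"
    then have "g ((1 - t) *\<^sub>R u + t *\<^sub>R w) \<le> (1 - t) * g u + t * g w"
      using u w by (intro convex_onD[OF g]) auto
    moreover have "u + t *\<^sub>R (w - u) = (1 - t) *\<^sub>R u + t *\<^sub>R w"
      by (simp add: algebra_simps)
    ultimately show "g (u + t *\<^sub>R (w - u)) - g u \<le> t * (g w - g u)"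
      by (simp add: algebra_simps)
  qed
  then show ?thesis by simp
qed

section \<open>Mean square error of a sample mean\<close>

lemma abs_inner_le_sum_norm_sq: "\<bar>inner (a::'a::real_inner) b\<bar> \<le> (norm a)\<^sup>2 + (norm b)\<^sup>2"
proof -
  have "2 * (norm a * norm b) \<le> (norm a)\<^sup>2 + (norm b)\<^sup>2"
    using sum_squares_bound[of "norm a" "norm b"] by (simp add: power2_eq_square)
  moreover have "0 \<le> norm a * norm b" by simp
  ultimately show ?thesis using Cauchy_Schwarz_ineq2[of a b] by linarith
qed

lemma (in prob_space) indep_var_of_indep_vars:
  assumes X: "indep_vars M' X I" and ij: "i \<in> I" "j \<in> I" "i \<noteq> j"
  shows "indep_var (M' i) (X i) (M' j) (X j)"
proof -
  have "indep_var (Pi\<^sub>M {i} M') (\<lambda>\<omega>. restrict (\<lambda>k. X k \<omega>) {i})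
      (Pi\<^sub>M {j} M') (\<lambda>\<omega>. restrict (\<lambda>k. X k \<omega>) {j})"
    using ij by (intro indep_var_restrict[OF X]) auto
  from indep_var_compose[OF this, of "\<lambda>f. f i" "M' i" "\<lambda>f. f j" "M' j"] show ?thesis
    by (simp add: o_def measurable_component_singleton)
qed

lemma (in prob_space) integral_inner_centered_indep:
  fixes X Y :: "'a \<Rightarrow> 'h::{real_inner, polish_space}"
  assumes indep: "indep_var borel X borel Y"
    and X: "integrable M X" and Y: "integrable M Y"
    and XY: "integrable M (\<lambda>\<omega>. inner (X \<omega> - expectation X) (Y \<omega> - expectation Y))"
  shows "(\<integral>\<omega>. inner (X \<omega> - expectation X) (Y \<omega> - expectation Y) \<partial>M) = 0"
proof -
  let ?muX = "distr M borel X" and ?muY = "distr M borel Y"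
  define H where "H z = inner (fst z - expectation X) (snd z - expectation Y)" for z
  have [measurable]: "X \<in> borel_measurable M" "Y \<in> borel_measurable M"
    using X Y by auto
  have [measurable]: "H \<in> borel_measurable (borel \<Otimes>\<^sub>M borel)"
    unfolding H_def by measurable
  interpret muX: prob_space ?muX by (rule prob_space_distr) simp
  interpret muY: prob_space ?muY by (rule prob_space_distr) simp
  interpret pair_sigma_finite ?muX ?muY ..
  have joint: "?muX \<Otimes>\<^sub>M ?muY = distr M (borel \<Otimes>\<^sub>M borel) (\<lambda>\<omega>. (X \<omega>, Y \<omega>))"
    using indep indep_var_distribution_eq by blast
  have H_int: "integrable (?muX \<Otimes>\<^sub>M ?muY) H"
    unfolding joint using XY by (subst integrable_distr_eq) (auto simp: H_def)
  have inner_zero: "(\<integral>y. H (x, y) \<partial>?muY) = 0" for x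
  proof -
    have "(\<integral>y. H (x, y) \<partial>?muY) = (\<integral>\<omega>. inner (x - expectation X) (Y \<omega> - expectation Y) \<partial>M)"
      by (subst integral_distr) (auto simp: H_def)
    also have "\<dots> = (\<integral>\<omega>. inner (x - expectation X) (Y \<omega>) - inner (x - expectation X) (expectation Y) \<partial>M)"
      by (simp add: inner_diff_right)
    also have "\<dots> = 0"
      using Y by (simp add: Bochner_Integration.integral_diff prob_space)
    finally show ?thesis .
  qed
  have "(\<integral>\<omega>. inner (X \<omega> - expectation X) (Y \<omega> - expectation Y) \<partial>M) = (\<integral>z. H z \<partial>(?muX \<Otimes>\<^sub>M ?muY))"
    unfolding joint by (subst integral_distr) (auto simp: H_def)
  also have "\<dots> = (\<integral>x. (\<integral>y. H (x, y) \<partial>?muY) \<partial>?muX)"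
    using integral_fst'[OF H_int] by simp
  finally show ?thesis by (simp add: inner_zero)
qed

lemma (in prob_space) integral_inner_deviations:
  fixes X :: "'i \<Rightarrow> 'a \<Rightarrow> 'h::{real_inner, polish_space}"
  assumes indep: "i \<noteq> j \<Longrightarrow> indep_var borel (X i) borel (X j)"
    and int: "integrable M (X i)" "integrable M (X j)"
    and mean: "expectation (X i) = m" "expectation (X j) = m"
    and sq_int: "integrable M (\<lambda>\<omega>. (norm (X i \<omega> - m))\<^sup>2)" "integrable M (\<lambda>\<omega>. (norm (X j \<omega> - m))\<^sup>2)"
  shows "integrable M (\<lambda>\<omega>. inner (X i \<omega> - m) (X j \<omega> - m))"
    and "(\<integral>\<omega>. inner (X i \<omega> - m) (X j \<omega> - m) \<partial>M)
      = (if i = j then (\<integral>\<omega>. (norm (X i \<omega> - m))\<^sup>2 \<partial>M) else 0)"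
proof -
  have [measurable]: "X i \<in> borel_measurable M" "X j \<in> borel_measurable M"
    using int by auto
  show cross_int: "integrable M (\<lambda>\<omega>. inner (X i \<omega> - m) (X j \<omega> - m))"
  proof (rule Bochner_Integration.integrable_bound)
    show "integrable M (\<lambda>\<omega>. (norm (X i \<omega> - m))\<^sup>2 + (norm (X j \<omega> - m))\<^sup>2)"
      using sq_int by auto
  qed (use abs_inner_le_sum_norm_sq in auto)
  show "(\<integral>\<omega>. inner (X i \<omega> - m) (X j \<omega> - m) \<partial>M)
      = (if i = j then (\<integral>\<omega>. (norm (X i \<omega> - m))\<^sup>2 \<partial>M) else 0)"
  proof (cases "i = j")
    case True
    then show ?thesis by (simp add: power2_norm_eq_inner)
  next
    case False
    then show ?thesis
      using integral_inner_centered_indep[OF indep int] cross_int by (simp add: mean)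
  qed
qed

lemma (in prob_space) sample_mean_mean_square_error:
  fixes X :: "'i \<Rightarrow> 'a \<Rightarrow> 'h::{real_inner, polish_space}"
  assumes I: "finite I" "I \<noteq> {}"
    and indep: "\<And>i j. i \<in> I \<Longrightarrow> j \<in> I \<Longrightarrow> i \<noteq> j \<Longrightarrow> indep_var borel (X i) borel (X j)"
    and int: "\<And>i. i \<in> I \<Longrightarrow> integrable M (X i)"
    and mean: "\<And>i. i \<in> I \<Longrightarrow> expectation (X i) = m"
    and sq_int: "\<And>i. i \<in> I \<Longrightarrow> integrable M (\<lambda>\<omega>. (norm (X i \<omega> - m))\<^sup>2)"
    and var: "\<And>i. i \<in> I \<Longrightarrow> (\<integral>\<omega>. (norm (X i \<omega> - m))\<^sup>2 \<partial>M) = s2"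
  defines "n \<equiv> real (card I)"
  shows "integrable M (\<lambda>\<omega>. (norm ((1 / n) *\<^sub>R (\<Sum>i\<in>I. X i \<omega>) - m))\<^sup>2)"
    and "(\<integral>\<omega>. (norm ((1 / n) *\<^sub>R (\<Sum>i\<in>I. X i \<omega>) - m))\<^sup>2 \<partial>M) = s2 / n"
proof -
  define Y where "Y i \<omega> = X i \<omega> - m" for i \<omega>
  have n: "n > 0" using I by (simp add: n_def card_gt_0_iff)
  have cross_int: "integrable M (\<lambda>\<omega>. inner (Y i \<omega>) (Y j \<omega>))"
    and cross: "(\<integral>\<omega>. inner (Y i \<omega>) (Y j \<omega>) \<partial>M) = (if i = j then s2 else 0)"
    if "i \<in> I" "j \<in> I" for i j
    using integral_inner_deviations[OF indep[OF that] int[OF that(1)] int[OF that(2)]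
        mean[OF that(1)] mean[OF that(2)] sq_int[OF that(1)] sq_int[OF that(2)]]
      var[OF that(1)] var[OF that(2)]
    by (simp_all add: Y_def)
  have expand: "(norm ((1 / n) *\<^sub>R (\<Sum>i\<in>I. X i \<omega>) - m))\<^sup>2
      = (1 / n)\<^sup>2 * (\<Sum>i\<in>I. \<Sum>j\<in>I. inner (Y i \<omega>) (Y j \<omega>))" for \<omega>
  proof -
    have "(1 / n) *\<^sub>R (\<Sum>i\<in>I. X i \<omega>) - m = (1 / n) *\<^sub>R (\<Sum>i\<in>I. Y i \<omega>)"
      using n by (simp add: Y_def sum_subtractf sum_constant_scaleR n_def scaleR_diff_right)
    then have "(norm ((1 / n) *\<^sub>R (\<Sum>i\<in>I. X i \<omega>) - m))\<^sup>2
        = (1 / n)\<^sup>2 * inner (\<Sum>i\<in>I. Y i \<omega>) (\<Sum>j\<in>I. Y j \<omega>)"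
      by (simp only: norm_scaleR power_mult_distrib power2_abs power2_norm_eq_inner)
    then show ?thesis
      unfolding inner_sum_left by (simp only: inner_sum_right)
  qed
  show "integrable M (\<lambda>\<omega>. (norm ((1 / n) *\<^sub>R (\<Sum>i\<in>I. X i \<omega>) - m))\<^sup>2)"
    unfolding expand using cross_int by auto
  have "(\<integral>\<omega>. (norm ((1 / n) *\<^sub>R (\<Sum>i\<in>I. X i \<omega>) - m))\<^sup>2 \<partial>M)
      = (1 / n)\<^sup>2 * (\<Sum>i\<in>I. \<Sum>j\<in>I. \<integral>\<omega>. inner (Y i \<omega>) (Y j \<omega>) \<partial>M)"
    unfolding expand using cross_int by (simp add: Bochner_Integration.integral_sum integrable_sum)
  also have "\<dots> = (1 / n)\<^sup>2 * (n * s2)"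
    using I(1) by (simp add: cross n_def)
  finally show "(\<integral>\<omega>. (norm ((1 / n) *\<^sub>R (\<Sum>i\<in>I. X i \<omega>) - m))\<^sup>2 \<partial>M) = s2 / n"
    using n by (simp add: power2_eq_square)
qed

section \<open>The deterministic estimate\<close>

lemma criticality_constant_le:
  fixes theta L :: real
  assumes theta: "theta > 0" and L: "L \<ge> 0"
  shows "1 / theta + L / theta\<^sup>2 + L\<^sup>2 / (4 * theta ^ 3)
    \<le> 1 + (1 / theta + L / theta\<^sup>2)\<^sup>2 + 4 * L\<^sup>2 / theta\<^sup>2"
proof -
  define a where "a = 1 / theta"
  define x where "x = L / theta\<^sup>2"
  have a: "a > 0" using theta by (simp add: a_def)
  have "a \<le> 1/2 + a\<^sup>2 / 2" "x \<le> 1/2 + x\<^sup>2 / 2"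
    using sum_squares_bound[of a 1] sum_squares_bound[of x 1] by (simp_all add: power2_eq_square)
  moreover have "x\<^sup>2 / (4 * a) \<le> x\<^sup>2 / 2 + 4 * x\<^sup>2 / a\<^sup>2"
  proof -
    have "a \<le> 2 * a\<^sup>2 + 16"
      using sum_squares_bound[of a "1/4"] by (simp add: power2_eq_square)
    then have "1 / (4 * a) \<le> 1 / 2 + 4 / a\<^sup>2"
      using a by (simp add: field_simps power2_eq_square)
    from mult_right_mono[OF this, of "x\<^sup>2"] show ?thesis
      by (simp add: field_simps)
  qed
  moreover have "0 \<le> 2 * a * x" "0 \<le> a\<^sup>2" using a L by (simp_all add: x_def)
  ultimately have "a + x + x\<^sup>2 / (4 * a) \<le> 1 + (a + x)\<^sup>2 + 4 * x\<^sup>2 / a\<^sup>2"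
    unfolding power2_sum by linarith
  moreover have "L\<^sup>2 / (4 * theta ^ 3) = x\<^sup>2 / (4 * a)" "4 * L\<^sup>2 / theta\<^sup>2 = 4 * x\<^sup>2 / a\<^sup>2"
    using theta by (simp_all add: a_def x_def power2_eq_square power3_eq_cube field_simps)
  ultimately show ?thesis by (simp add: a_def x_def)
qed

lemma linear_minus_quadratic_le:
  fixes theta b D :: real
  assumes "theta > 0"
  shows "b * D - theta * D\<^sup>2 \<le> b\<^sup>2 / (4 * theta)"
proof -
  have "0 \<le> theta * (D - b / (2 * theta))\<^sup>2" using assms by simp
  also have "\<dots> = theta * D\<^sup>2 - b * D + b\<^sup>2 / (4 * theta)"
    using assms by (simp add: power2_eq_square field_simps)
  finally show ?thesis by simp
qed

text \<open>Below, gs and gu stand for the gradients of the true objective at ustar and at the sample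
  solution u, hs and hu for those of the sample average objective.\<close>

lemma sample_solution_gap_le:
  fixes gs hs hu u ustar :: "'u::real_inner"
  assumes VI: "0 \<le> inner hu (ustar - u) + p ustar - p u"
    and mono: "0 \<le> inner (hu - hs) (u - ustar)"
    and err: "\<bar>inner (hs - gs) (u - ustar)\<bar> \<le> e"
  shows "inner gs (u - ustar) + p u - p ustar \<le> e"
proof -
  have "inner hu (ustar - u) = - inner (hu - hs) (u - ustar) - inner hs (u - ustar)"
    by (simp add: inner_diff_left inner_diff_right)
  with VI mono have "inner gs (u - ustar) + p u - p ustar \<le> - inner (hs - gs) (u - ustar)"
    by (simp add: inner_diff_left)
  then show ?thesis using err by linarith
qed

lemma criticality_bound_of_quadratic_growth:
  fixes gs gu hs hu u ustar v :: "'u::real_inner" and iU :: "'u \<Rightarrow> 'U::real_normed_vector"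
  assumes iU: "linear iU" and theta: "theta > 0" and L: "L \<ge> 0" and eps: "eps \<ge> 0"
    and u: "u \<in> S" and v: "v \<in> S"
    and growth: "\<And>v. v \<in> S \<Longrightarrow> theta * (norm (iU (v - ustar)))\<^sup>2 \<le> inner gs (v - ustar) + p v - p ustar"
    and VI: "0 \<le> inner hu (ustar - u) + p ustar - p u"
    and mono: "0 \<le> inner (hu - hs) (u - ustar)"
    and err: "\<And>w. \<bar>inner (hs - gs) w\<bar> \<le> eps * norm (iU w)"
    and lip: "\<And>w. \<bar>inner (gu - gs) w\<bar> \<le> L * norm (iU (u - ustar)) * norm (iU w)"
  shows "inner gu (u - v) + p u - p v \<le> (1 / theta + L / theta\<^sup>2 + L\<^sup>2 / (4 * theta ^ 3)) * eps\<^sup>2"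
proof -
  define d where "d = norm (iU (u - ustar))"
  define D where "D = norm (iU (v - ustar))"
  define A where "A = inner gs (u - ustar) + p u - p ustar"
  have "d \<ge> 0" "D \<ge> 0" by (simp_all add: d_def D_def)
  have A_le: "A \<le> eps * d"
    unfolding A_def d_def by (rule sample_solution_gap_le[OF VI mono err])
  have "theta * d * d \<le> eps * d"
    using growth[OF u] A_le by (simp add: A_def d_def power2_eq_square)
  then have d_le: "d \<le> eps / theta"
    using theta eps \<open>d \<ge> 0\<close> by (cases "d = 0") (simp_all add: field_simps)
  have "norm (iU (u - v)) \<le> d + D"
    using norm_triangle_ineq4[of "iU (u - ustar)" "iU (v - ustar)"]
    by (simp add: d_def D_def linear_diff[OF iU, symmetric])
  then have "L * d * norm (iU (u - v)) \<le> L * d * (d + D)"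
    using L \<open>d \<ge> 0\<close> by (simp add: mult_left_mono)
  then have lip_uv: "inner (gu - gs) (u - v) \<le> L * d * (d + D)"
    using lip[of "u - v"] by (simp add: d_def abs_le_iff)
  have "inner gu (u - v) + p u - p v
      = A + (inner gs (ustar - v) + p ustar - p v) + inner (gu - gs) (u - v)"
    by (simp add: A_def inner_diff_left inner_diff_right)
  \<comment> \<open>The cross term L d D is absorbed by the growth term - theta D^2 at v.\<close>
  also have "\<dots> \<le> eps * d + L * d\<^sup>2 + L\<^sup>2 * d\<^sup>2 / (4 * theta)"
    using A_le growth[OF v] lip_uv linear_minus_quadratic_le[OF theta, of "L * d" D]
    by (simp add: D_def inner_diff_right power2_eq_square algebra_simps)
  also have "\<dots> \<le> eps * (eps / theta) + L * (eps / theta)\<^sup>2 + L\<^sup>2 * (eps / theta)\<^sup>2 / (4 * theta)"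
    using d_le \<open>d \<ge> 0\<close> eps L theta
    by (intro add_mono mult_left_mono divide_right_mono power_mono) auto
  also have "\<dots> = (1 / theta + L / theta\<^sup>2 + L\<^sup>2 / (4 * theta ^ 3)) * eps\<^sup>2"
    using theta by (simp add: power2_eq_square power3_eq_cube field_simps)
  finally show ?thesis .
qed

section \<open>The sample average approximation problem\<close>

lemma convex_epigraph_imp_convex_on_edom:
  fixes psi :: "'a::real_vector \<Rightarrow> ereal"
  assumes cvx: "convex {(u, c::real). psi u \<le> ereal c}" and fin: "\<And>u. psi u > -\<infinity>"
  shows "convex (edom psi)" and "convex_on (edom psi) (\<lambda>u. real_of_ereal (psi u))"
proof -
  have real: "psi u = ereal (real_of_ereal (psi u))" if "u \<in> edom psi" for u
    using that fin[of u] by (cases "psi u") (auto simp: edom_def)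
  have comb: "psi ((1 - t) *\<^sub>R u + t *\<^sub>R v) \<le> ereal ((1 - t) * real_of_ereal (psi u) + t * real_of_ereal (psi v))"
    if "u \<in> edom psi" "v \<in> edom psi" "0 \<le> t" "t \<le> 1" for u v t
  proof -
    have "(1 - t) *\<^sub>R (u, real_of_ereal (psi u)) + t *\<^sub>R (v, real_of_ereal (psi v)) \<in> {(u, c). psi u \<le> ereal c}"
      using that real by (intro convexD[OF cvx]) auto
    then show ?thesis by simp
  qed
  then have comb_edom: "(1 - t) *\<^sub>R u + t *\<^sub>R v \<in> edom psi"
    if "u \<in> edom psi" "v \<in> edom psi" "0 \<le> t" "t \<le> 1" for u v t
    using that by (fastforce simp: edom_def intro: le_less_trans)
  show "convex (edom psi)"
  proof (rule convexI)
    fix u v and s t :: real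
    assume uv: "u \<in> edom psi" "v \<in> edom psi" and st: "0 \<le> s" "0 \<le> t" "s + t = 1"
    then have "s = 1 - t" "t \<le> 1" by simp_all
    with comb_edom[OF uv st(2)] show "s *\<^sub>R u + t *\<^sub>R v \<in> edom psi" by simp
  qed
  then show "convex_on (edom psi) (\<lambda>u. real_of_ereal (psi u))"
    using comb comb_edom real by (intro convex_onI) (metis ereal_less_eq(3) less_imp_le)+
qed

locale composite_stochastic_problem = prob_space P
  for P :: "'om measure" +
  fixes xi :: "'om \<Rightarrow> 'x::topological_space"
    and B :: "'u::{real_inner, complete_space} \<Rightarrow> 'w::real_normed_vector"
    and psi :: "'u \<Rightarrow> ereal"
    and U0 :: "'u set"
    and f :: "'w \<Rightarrow> 'x \<Rightarrow> real"
    and zf :: "'x \<Rightarrow> real"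
    and Dg :: "'x \<Rightarrow> 'u \<Rightarrow> 'u"
    and Dwf :: "'w \<Rightarrow> 'x \<Rightarrow> ('w \<Rightarrow>\<^sub>L real)"
    and zD :: "'x \<Rightarrow> real"
  assumes xi_meas[measurable]: "xi \<in> measurable P borel"
    and B_linear: "bounded_linear B"
    and psi_pcc: "proper_closed_convex psi"
    and U0: "convex U0" "edom psi \<subseteq> U0"
    and f_meas: "\<And>w. w \<in> B ` U0 \<Longrightarrow> (\<lambda>x. f w x) \<in> borel_measurable borel"
    and f_bound: "\<And>u x. u \<in> U0 \<Longrightarrow> \<bar>f (B u) x\<bar> \<le> zf x"
    and zf_int: "integrable (distr P borel xi) zf"
    and g_diff: "\<And>x u. u \<in> U0 \<Longrightarrow> ((\<lambda>v. f (B v) x) has_derivative (\<lambda>h. inner (Dg x u) h)) (at u)"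
    and Dwf_meas: "\<And>w. w \<in> B ` edom psi \<Longrightarrow> (\<lambda>x. Dwf w x) \<in> borel_measurable borel"
    and Dg_Dwf: "\<And>x u. u \<in> edom psi \<Longrightarrow> Dg x u = adj B (Dwf (B u) x)"
    and Dwf_bound: "\<And>x u. u \<in> edom psi \<Longrightarrow> norm (Dwf (B u) x) \<le> zD x"
    and zD_int: "integrable (distr P borel xi) zD"
    and f_convex: "\<And>x. convex_on (B ` U0) (\<lambda>w. f w x)"
begin

text \<open>psi_real takes the junk value 0 outside edom psi, and gradF u is the paper's B* DF(Bu).\<close>

definition psi_real :: "'u \<Rightarrow> real" where
  "psi_real u = real_of_ereal (psi u)"

definition gradF :: "'u \<Rightarrow> 'u" where
  "gradF u = adj B (DFexp P xi Dwf (B u))"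

lemma psi_eq_psi_real: "u \<in> edom psi \<Longrightarrow> psi u = ereal (psi_real u)"
  using psi_pcc by (cases "psi u") (auto simp: proper_closed_convex_def edom_def psi_real_def)

lemma edom_nonempty: "edom psi \<noteq> {}"
  using psi_pcc by (auto simp: proper_closed_convex_def edom_def)

lemma convex_edom: "convex (edom psi)"
  and convex_on_psi_real: "convex_on (edom psi) psi_real"
  using convex_epigraph_imp_convex_on_edom[of psi] psi_pcc
  by (auto simp: proper_closed_convex_def psi_real_def[abs_def])

lemma integrable_f:
  assumes "u \<in> U0"
  shows "integrable P (\<lambda>\<omega>. f (B u) (xi \<omega>))"
proof (rule Bochner_Integration.integrable_bound)
  show "integrable P (\<lambda>\<omega>. zf (xi \<omega>))"
    using zf_int by (rule integrable_distr[OF xi_meas])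
  show "(\<lambda>\<omega>. f (B u) (xi \<omega>)) \<in> borel_measurable P"
    using assms by (intro measurable_compose[OF xi_meas f_meas]) auto
  show "AE \<omega> in P. norm (f (B u) (xi \<omega>)) \<le> norm (zf (xi \<omega>))"
    using order_trans[OF f_bound[OF assms] abs_ge_self] by simp
qed

lemma integrable_Dwf_apply:
  assumes u: "u \<in> edom psi"
  shows "integrable P (\<lambda>\<omega>. blinfun_apply (Dwf (B u) (xi \<omega>)) y)"
proof (rule Bochner_Integration.integrable_bound)
  show "integrable P (\<lambda>\<omega>. zD (xi \<omega>) * norm y)"
    using integrable_distr[OF xi_meas zD_int] by auto
  have "(\<lambda>\<omega>. Dwf (B u) (xi \<omega>)) \<in> borel_measurable P"
    using u by (intro measurable_compose[OF xi_meas Dwf_meas]) auto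
  moreover have "(\<lambda>a. blinfun_apply a y) \<in> borel_measurable borel"
    by (intro borel_measurable_continuous_onI linear_continuous_on blinfun.bounded_linear_left)
  ultimately show "(\<lambda>\<omega>. blinfun_apply (Dwf (B u) (xi \<omega>)) y) \<in> borel_measurable P"
    by (rule measurable_compose)
  show "AE \<omega> in P. norm (blinfun_apply (Dwf (B u) (xi \<omega>)) y) \<le> norm (zD (xi \<omega>) * norm y)"
    using order_trans[OF norm_blinfun mult_right_mono[OF Dwf_bound[OF u] norm_ge_zero]]
    by (intro AE_I2) (metis abs_ge_self order_trans real_norm_def)
qed

lemma DFexp_apply:
  assumes u: "u \<in> edom psi"
  shows "blinfun_apply (DFexp P xi Dwf (B u)) y = (\<integral>\<omega>. blinfun_apply (Dwf (B u) (xi \<omega>)) y \<partial>P)"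
proof -
  have "bounded_linear (\<lambda>y. \<integral>\<omega>. blinfun_apply (Dwf (B u) (xi \<omega>)) y \<partial>P)"
  proof (rule bounded_linear_intro[where K="\<integral>\<omega>. zD (xi \<omega>) \<partial>P"])
    fix y z
    show "(\<integral>\<omega>. Dwf (B u) (xi \<omega>) (y + z) \<partial>P) = (\<integral>\<omega>. Dwf (B u) (xi \<omega>) y \<partial>P) + (\<integral>\<omega>. Dwf (B u) (xi \<omega>) z \<partial>P)"
      using integrable_Dwf_apply[OF u] by (simp add: blinfun.add_right)
  next
    fix r y
    show "(\<integral>\<omega>. Dwf (B u) (xi \<omega>) (r *\<^sub>R y) \<partial>P) = r *\<^sub>R (\<integral>\<omega>. Dwf (B u) (xi \<omega>) y \<partial>P)"
      by (simp add: blinfun.scaleR_right)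
  next
    fix y
    have "norm (\<integral>\<omega>. Dwf (B u) (xi \<omega>) y \<partial>P) \<le> (\<integral>\<omega>. norm (Dwf (B u) (xi \<omega>) y) \<partial>P)"
      by (rule integral_norm_bound)
    also have "\<dots> \<le> (\<integral>\<omega>. zD (xi \<omega>) * norm y \<partial>P)"
    proof (rule integral_mono)
      show "norm (Dwf (B u) (xi \<omega>) y) \<le> zD (xi \<omega>) * norm y" for \<omega>
        using order_trans[OF norm_blinfun mult_right_mono[OF Dwf_bound[OF u] norm_ge_zero]] .
    qed (use integrable_Dwf_apply[OF u] integrable_distr[OF xi_meas zD_int] in auto)
    finally show "norm (\<integral>\<omega>. Dwf (B u) (xi \<omega>) y \<partial>P) \<le> norm y * (\<integral>\<omega>. zD (xi \<omega>) \<partial>P)"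
      by (simp add: mult.commute)
  qed
  then show ?thesis by (simp add: DFexp_def bounded_linear_Blinfun_apply)
qed

lemma inner_Dg: "u \<in> edom psi \<Longrightarrow> inner (Dg x u) w = blinfun_apply (Dwf (B u) x) (B w)"
  by (simp add: Dg_Dwf inner_adj[OF B_linear])

lemma integrable_inner_Dg: "u \<in> edom psi \<Longrightarrow> integrable P (\<lambda>\<omega>. inner (Dg (xi \<omega>) u) w)"
  using integrable_Dwf_apply[of u "B w"] by (simp add: inner_Dg)

lemma inner_gradF: "u \<in> edom psi \<Longrightarrow> inner (gradF u) w = (\<integral>\<omega>. inner (Dg (xi \<omega>) u) w \<partial>P)"
  by (simp add: gradF_def inner_adj[OF B_linear] DFexp_apply inner_Dg)

lemma f_above_tangent:
  assumes "u \<in> U0" "w \<in> U0"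
  shows "f (B u) x + inner (Dg x u) (w - u) \<le> f (B w) x"
proof -
  interpret B: bounded_linear B by (rule B_linear)
  have "convex_on U0 (\<lambda>v. f (B v) x)"
  proof (rule convex_onI)
    fix t :: real and y z assume "0 < t" "t < 1" "y \<in> U0" "z \<in> U0"
    then show "f (B ((1 - t) *\<^sub>R y + t *\<^sub>R z)) x \<le> (1 - t) * f (B y) x + t * f (B z) x"
      by (simp add: B.add B.scaleR convex_onD[OF f_convex])
  qed (rule U0(1))
  from convex_on_above_tangent[OF this assms g_diff[OF assms(1)]] show ?thesis .
qed

lemma Fexp_above_tangent:
  assumes u: "u \<in> edom psi" and w: "w \<in> U0"
  shows "Fexp P xi f (B u) + inner (gradF u) (w - u) \<le> Fexp P xi f (B w)"
proof -
  have uU0: "u \<in> U0" using u U0(2) by auto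
  have "Fexp P xi f (B u) + inner (gradF u) (w - u) = (\<integral>\<omega>. f (B u) (xi \<omega>) + inner (Dg (xi \<omega>) u) (w - u) \<partial>P)"
    using integrable_f[OF uU0] integrable_inner_Dg[OF u] by (simp add: Fexp_def inner_gradF[OF u])
  also have "\<dots> \<le> Fexp P xi f (B w)"
    unfolding Fexp_def
    using integrable_f[OF uU0] integrable_inner_Dg[OF u] integrable_f[OF w] f_above_tangent[OF uU0 w]
    by (intro integral_mono) auto
  finally show ?thesis .
qed

lemma Gobj_gap_le_Psi_crit:
  assumes u: "u \<in> edom psi" and v: "v \<in> edom psi"
  shows "Gobj P xi f B psi u - Gobj P xi f B psi v \<le> Psi_crit P xi Dwf B psi u"
proof -
  have "Gobj P xi f B psi u - Gobj P xi f B psi v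
      = ereal (Fexp P xi f (B u) - Fexp P xi f (B v) + psi_real u - psi_real v)"
    using u v by (simp add: Gobj_def psi_eq_psi_real)
  also have "\<dots> \<le> ereal (inner (gradF u) (u - v) + psi_real u - psi_real v)"
    using Fexp_above_tangent[OF u, of v] v U0(2) by (auto simp: inner_diff_right)
  also have "\<dots> = ereal (inner (gradF u) (u - v)) + psi u - psi v"
    using u v by (simp add: psi_eq_psi_real)
  also have "\<dots> \<le> Psi_crit P xi Dwf B psi u"
    unfolding Psi_crit_def gradF_def by (rule SUP_upper[OF v])
  finally show ?thesis .
qed

end

locale saa_problem = composite_stochastic_problem P xi B psi U0 f zf Dg Dwf zD
  for P :: "'om measure" and xi :: "'om \<Rightarrow> 'x::polish_space"
    and B :: "'u::{real_inner, complete_space} \<Rightarrow> 'w::real_normed_vector"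
    and psi U0 f zf Dg Dwf zD +
  fixes xis :: "nat \<Rightarrow> 'om \<Rightarrow> 'x"
    and ustar :: "'u"
    and uN :: "nat \<Rightarrow> 'om \<Rightarrow> 'u"
    and iU :: "'u \<Rightarrow> 'U::real_normed_vector"
    and jV :: "('U \<Rightarrow>\<^sub>L real) \<Rightarrow> 'u"
    and kH :: "'h::{real_inner, polish_space} \<Rightarrow> ('U \<Rightarrow>\<^sub>L real)"
    and CH :: real
    and theta :: real
    and hg :: "'x \<Rightarrow> 'h"
    and L :: real
  assumes xis_meas: "\<And>i. i \<ge> 1 \<Longrightarrow> xis i \<in> measurable P borel"
    and xis_indep: "indep_vars (\<lambda>_. borel) xis {1..}"
    and xis_distr: "\<And>i. i \<ge> 1 \<Longrightarrow> distr P borel (xis i) = distr P borel xi"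
    and ustar_opt: "\<And>u. Gobj P xi f B psi ustar \<le> Gobj P xi f B psi u"
    and uN_opt: "\<And>N \<omega> u. N \<ge> 1 \<Longrightarrow>
        ereal (Fhat N xis f (B (uN N \<omega>)) \<omega>) + psi (uN N \<omega>) \<le> ereal (Fhat N xis f (B u) \<omega>) + psi u"
    and iU_linear: "linear iU"
    and jV_linear: "bounded_linear jV"
    and kH_linear: "bounded_linear kH"
    and kH_const: "\<And>h. norm (kH h) \<le> CH * norm h"
    and pairing: "\<And>v u. \<bar>inner (jV v) u\<bar> \<le> norm v * norm (iU u)"
    and theta_pos: "theta > 0"
    and growth: "\<And>u. ereal (inner (adj B (DFexp P xi Dwf (B ustar))) (u - ustar)) + psi u - psi ustar
                   \<ge> ereal (theta * (norm (iU (u - ustar)))\<^sup>2)"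
    and hg_repr: "\<And>x. jV (kH (hg x)) = Dg x ustar"
    and hg_int: "integrable (distr P borel xi) hg"
    and hg_var: "integrable P (\<lambda>\<omega>. (norm (hg (xi \<omega>) - (\<integral>\<omega>'. hg (xi \<omega>') \<partial>P)))\<^sup>2)"
    and L_nonneg: "L \<ge> 0"
    and grad_lip: "\<And>x u1 u2. u1 \<in> edom psi \<Longrightarrow> u2 \<in> edom psi \<Longrightarrow>
        \<exists>v. jV v = Dg x u2 - Dg x u1 \<and> norm v \<le> L * norm (iU (u2 - u1))"
begin

definition hg_mean :: 'h where
  "hg_mean = (\<integral>\<omega>. hg (xi \<omega>) \<partial>P)"

definition hg_variance :: real where
  "hg_variance = (\<integral>\<omega>. (norm (hg (xi \<omega>) - hg_mean))\<^sup>2 \<partial>P)"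

definition hg_sample_mean :: "nat \<Rightarrow> 'om \<Rightarrow> 'h" where
  "hg_sample_mean N \<omega> = (1 / real N) *\<^sub>R (\<Sum>i\<in>{1..N}. hg (xis i \<omega>))"

definition growth_lipschitz_constant :: real where
  "growth_lipschitz_constant = 1 + (1 / theta + L / theta\<^sup>2)\<^sup>2 + 4 * L\<^sup>2 / theta\<^sup>2"

definition sample_grad :: "nat \<Rightarrow> 'om \<Rightarrow> 'u \<Rightarrow> 'u" where
  "sample_grad N \<omega> v = (1 / real N) *\<^sub>R (\<Sum>i\<in>{1..N}. Dg (xis i \<omega>) v)"

lemma hg_measurable[measurable]: "hg \<in> borel_measurable borel"
  using borel_measurable_integrable[OF hg_int] by (simp cong: measurable_cong_sets)

lemma hg_sample_moments:
  assumes i: "i \<ge> 1"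
  shows "integrable P (\<lambda>\<omega>. hg (xis i \<omega>))"
    and "expectation (\<lambda>\<omega>. hg (xis i \<omega>)) = hg_mean"
    and "integrable P (\<lambda>\<omega>. (norm (hg (xis i \<omega>) - hg_mean))\<^sup>2)"
    and "(\<integral>\<omega>. (norm (hg (xis i \<omega>) - hg_mean))\<^sup>2 \<partial>P) = hg_variance"
proof -
  note [measurable] = xis_meas[OF i]
  have "integrable (distr P borel (xis i)) hg" using hg_int xis_distr[OF i] by simp
  then show "integrable P (\<lambda>\<omega>. hg (xis i \<omega>))"
    and "expectation (\<lambda>\<omega>. hg (xis i \<omega>)) = hg_mean"
    using integrable_comp_distr[OF xis_meas[OF i]] integrable_comp_distr(2)[OF xi_meas hg_int]
    by (simp_all add: hg_mean_def xis_distr[OF i])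
  have "integrable (distr P borel xi) (\<lambda>x. (norm (hg x - hg_mean))\<^sup>2)"
    using hg_var by (subst integrable_distr_eq) (auto simp: hg_mean_def)
  then show "integrable P (\<lambda>\<omega>. (norm (hg (xis i \<omega>) - hg_mean))\<^sup>2)"
    by (subst (asm) xis_distr[OF i, symmetric]) (subst (asm) integrable_distr_eq; simp)
  have "(\<integral>\<omega>. (norm (hg (xis i \<omega>) - hg_mean))\<^sup>2 \<partial>P)
      = (\<integral>x. (norm (hg x - hg_mean))\<^sup>2 \<partial>distr P borel (xis i))"
    by (subst integral_distr) auto
  also have "\<dots> = hg_variance"
    unfolding xis_distr[OF i] hg_variance_def by (subst integral_distr) auto
  finally show "(\<integral>\<omega>. (norm (hg (xis i \<omega>) - hg_mean))\<^sup>2 \<partial>P) = hg_variance" .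
qed

lemma hg_sample_mean_mean_square_error:
  assumes N: "N \<ge> 1"
  shows "integrable P (\<lambda>\<omega>. (norm (hg_sample_mean N \<omega> - hg_mean))\<^sup>2)"
    and "(\<integral>\<omega>. (norm (hg_sample_mean N \<omega> - hg_mean))\<^sup>2 \<partial>P) = hg_variance / N"
proof -
  have indep: "indep_var borel (\<lambda>\<omega>. hg (xis i \<omega>)) borel (\<lambda>\<omega>. hg (xis j \<omega>))"
    if "i \<in> {1..N}" "j \<in> {1..N}" "i \<noteq> j" for i j
    using indep_var_compose[OF indep_var_of_indep_vars[OF xis_indep] hg_measurable hg_measurable]
      that by (simp add: o_def)
  note moments = hg_sample_moments
  show "integrable P (\<lambda>\<omega>. (norm (hg_sample_mean N \<omega> - hg_mean))\<^sup>2)"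
    and "(\<integral>\<omega>. (norm (hg_sample_mean N \<omega> - hg_mean))\<^sup>2 \<partial>P) = hg_variance / N"
    using sample_mean_mean_square_error[of "{1..N}" "\<lambda>i \<omega>. hg (xis i \<omega>)" hg_mean hg_variance]
      N indep moments by (auto simp: hg_sample_mean_def)
qed

lemma ustar_edom: "ustar \<in> edom psi"
proof -
  obtain u where u: "u \<in> edom psi" using edom_nonempty by blast
  have "Gobj P xi f B psi ustar \<le> Gobj P xi f B psi u" by (rule ustar_opt)
  also have "\<dots> < \<infinity>" using u by (simp add: Gobj_def psi_eq_psi_real)
  finally show ?thesis by (cases "psi ustar") (auto simp: Gobj_def edom_def)
qed

lemma uN_edom:
  assumes "N \<ge> 1"
  shows "uN N \<omega> \<in> edom psi"
proof -
  have "ereal (Fhat N xis f (B (uN N \<omega>)) \<omega>) + psi (uN N \<omega>) \<le> ereal (Fhat N xis f (B ustar) \<omega>) + psi ustar"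
    by (rule uN_opt[OF assms])
  also have "\<dots> < \<infinity>" using ustar_edom by (simp add: psi_eq_psi_real)
  finally show ?thesis by (cases "psi (uN N \<omega>)") (auto simp: edom_def)
qed

lemma gradF_ustar: "gradF ustar = jV (kH hg_mean)"
proof (rule vector_eq_rdot[THEN iffD1], rule allI)
  fix w
  have "bounded_linear (\<lambda>h. jV (kH h))"
    using bounded_linear_compose[OF jV_linear kH_linear] .
  then have "bounded_linear (\<lambda>h. inner (jV (kH h)) w)"
    by (rule bounded_linear_compose[OF bounded_linear_inner_left])
  note mean = integral_bounded_linear[OF this integrable_comp_distr(1)[OF xi_meas hg_int]]
  have "inner (gradF ustar) w = (\<integral>\<omega>. inner (jV (kH (hg (xi \<omega>)))) w \<partial>P)"
    by (simp add: inner_gradF[OF ustar_edom] hg_repr)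
  also have "\<dots> = inner (jV (kH hg_mean)) w"
    unfolding hg_mean_def by (rule mean)
  finally show "inner (gradF ustar) w = inner (jV (kH hg_mean)) w" .
qed

lemma gradF_lipschitz:
  assumes u: "u \<in> edom psi"
  shows "\<bar>inner (gradF u - gradF ustar) w\<bar> \<le> L * norm (iU (u - ustar)) * norm (iU w)"
proof -
  have pointwise: "\<bar>inner (Dg x u - Dg x ustar) w\<bar> \<le> L * norm (iU (u - ustar)) * norm (iU w)" for x
  proof -
    obtain v where v: "jV v = Dg x u - Dg x ustar" "norm v \<le> L * norm (iU (u - ustar))"
      using grad_lip[OF ustar_edom u] by blast
    then show ?thesis
      using order_trans[OF pairing[of v w] mult_right_mono[OF v(2) norm_ge_zero]] by simp
  qed
  have "inner (gradF u - gradF ustar) w = (\<integral>\<omega>. inner (Dg (xi \<omega>) u - Dg (xi \<omega>) ustar) w \<partial>P)"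
    using integrable_inner_Dg[OF u] integrable_inner_Dg[OF ustar_edom]
    by (simp add: inner_diff_left inner_gradF[OF u] inner_gradF[OF ustar_edom])
  also have "\<bar>\<dots>\<bar> \<le> (\<integral>\<omega>. \<bar>inner (Dg (xi \<omega>) u - Dg (xi \<omega>) ustar) w\<bar> \<partial>P)"
    by (rule integral_abs_bound)
  also have "\<dots> \<le> L * norm (iU (u - ustar)) * norm (iU w)"
    using integrable_inner_Dg[OF u] integrable_inner_Dg[OF ustar_edom] pointwise
    by (intro integral_le_const) (auto simp: inner_diff_left)
  finally show ?thesis .
qed

lemma growth_psi_real:
  "v \<in> edom psi \<Longrightarrow>
    theta * (norm (iU (v - ustar)))\<^sup>2 \<le> inner (gradF ustar) (v - ustar) + psi_real v - psi_real ustar"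
  using growth[of v] ustar_edom by (simp add: gradF_def psi_eq_psi_real)

lemma Fhat_has_derivative:
  assumes "z \<in> U0"
  shows "((\<lambda>v. Fhat N xis f (B v) \<omega>) has_derivative (\<lambda>h. inner (sample_grad N \<omega> z) h)) (at z)"
proof -
  have "((\<lambda>v. (1 / real N) * (\<Sum>i\<in>{1..N}. f (B v) (xis i \<omega>))) has_derivative
      (\<lambda>h. (1 / real N) * (\<Sum>i\<in>{1..N}. inner (Dg (xis i \<omega>) z) h))) (at z)"
    by (intro has_derivative_mult_right has_derivative_sum g_diff[OF assms])
  then show ?thesis
    by (simp add: Fhat_def[abs_def] sample_grad_def inner_sum_left)
qed

lemma saa_variational_inequality:
  assumes N: "N \<ge> 1" and u: "u = uN N \<omega>"
  shows "0 \<le> inner (sample_grad N \<omega> u) (ustar - u) + psi_real ustar - psi_real u"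
proof -
  have u_edom: "u \<in> edom psi" using uN_edom[OF N] by (simp add: u)
  have "psi_real u - psi_real ustar \<le> inner (sample_grad N \<omega> u) (ustar - u)"
  proof (rule directional_derivative_ge[OF Fhat_has_derivative])
    show "u \<in> U0" using u_edom U0(2) by auto
    fix t :: real assume t: "0 < t" "t \<le> 1"
    have ut: "u + t *\<^sub>R (ustar - u) = (1 - t) *\<^sub>R u + t *\<^sub>R ustar"
      by (simp add: algebra_simps)
    then have ut_edom: "u + t *\<^sub>R (ustar - u) \<in> edom psi"
      using t u_edom ustar_edom convex_edom by (simp add: convexD_alt)
    have "psi_real (u + t *\<^sub>R (ustar - u)) \<le> (1 - t) * psi_real u + t * psi_real ustar"
      unfolding ut using t u_edom ustar_edom by (intro convex_onD[OF convex_on_psi_real]) auto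
    moreover have "Fhat N xis f (B u) \<omega> + psi_real u
        \<le> Fhat N xis f (B (u + t *\<^sub>R (ustar - u))) \<omega> + psi_real (u + t *\<^sub>R (ustar - u))"
      using uN_opt[OF N, of \<omega> "u + t *\<^sub>R (ustar - u)"] u_edom ut_edom
      by (simp add: u psi_eq_psi_real)
    ultimately show "t * (psi_real u - psi_real ustar)
        \<le> Fhat N xis f (B (u + t *\<^sub>R (ustar - u))) \<omega> - Fhat N xis f (B u) \<omega>"
      by (simp add: algebra_simps)
  qed
  then show ?thesis by simp
qed

lemma sample_grad_monotone:
  assumes "u \<in> U0" "v \<in> U0"
  shows "0 \<le> inner (sample_grad N \<omega> u - sample_grad N \<omega> v) (u - v)"
proof -
  have each: "0 \<le> inner (Dg x u - Dg x v) (u - v)" for x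
    using f_above_tangent[OF assms, of x] f_above_tangent[OF assms(2,1), of x]
    by (simp add: inner_diff_left inner_diff_right)
  have "inner (sample_grad N \<omega> u - sample_grad N \<omega> v) (u - v)
      = (1 / real N) * (\<Sum>i\<in>{1..N}. inner (Dg (xis i \<omega>) u - Dg (xis i \<omega>) v) (u - v))"
    unfolding sample_grad_def
    by (simp only: scaleR_diff_right[symmetric] sum_subtractf[symmetric] inner_scaleR_left inner_sum_left)
  also have "\<dots> \<ge> 0" using each by (simp add: sum_nonneg)
  finally show ?thesis .
qed

lemma sample_grad_error:
  "\<bar>inner (sample_grad N \<omega> ustar - gradF ustar) w\<bar>
    \<le> \<bar>CH\<bar> * norm (hg_sample_mean N \<omega> - hg_mean) * norm (iU w)"
proof -
  interpret jV: bounded_linear jV by (rule jV_linear)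
  interpret kH: bounded_linear kH by (rule kH_linear)
  have "sample_grad N \<omega> ustar - gradF ustar = jV (kH (hg_sample_mean N \<omega> - hg_mean))"
    by (simp add: sample_grad_def hg_sample_mean_def gradF_ustar hg_repr[symmetric]
        jV.scaleR kH.scaleR jV.sum kH.sum jV.diff kH.diff)
  moreover have "norm (kH h) \<le> \<bar>CH\<bar> * norm h" for h
    using order_trans[OF kH_const mult_right_mono[OF abs_ge_self norm_ge_zero]] .
  ultimately show ?thesis
    using order_trans[OF pairing mult_right_mono[OF _ norm_ge_zero]] by simp
qed

lemma Psi_crit_uN_le:
  assumes N: "N \<ge> 1"
  shows "Psi_crit P xi Dwf B psi (uN N \<omega>)
    \<le> ereal (growth_lipschitz_constant * CH\<^sup>2 * (norm (hg_sample_mean N \<omega> - hg_mean))\<^sup>2)"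
  unfolding Psi_crit_def
proof (rule SUP_least)
  fix v assume v: "v \<in> edom psi"
  define u where "u = uN N \<omega>"
  define eps where "eps = \<bar>CH\<bar> * norm (hg_sample_mean N \<omega> - hg_mean)"
  have u: "u \<in> edom psi" and uU0: "u \<in> U0" and ustarU0: "ustar \<in> U0"
    using uN_edom[OF N] ustar_edom U0(2) by (auto simp: u_def)
  have "inner (gradF u) (u - v) + psi_real u - psi_real v
      \<le> (1 / theta + L / theta\<^sup>2 + L\<^sup>2 / (4 * theta ^ 3)) * eps\<^sup>2"
  proof (rule criticality_bound_of_quadratic_growth[OF iU_linear theta_pos L_nonneg _ u v])
    show "0 \<le> eps" by (simp add: eps_def)
    show "0 \<le> inner (sample_grad N \<omega> u) (ustar - u) + psi_real ustar - psi_real u"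
      using saa_variational_inequality[OF N u_def] .
    show "0 \<le> inner (sample_grad N \<omega> u - sample_grad N \<omega> ustar) (u - ustar)"
      by (rule sample_grad_monotone[OF uU0 ustarU0])
    show "\<bar>inner (sample_grad N \<omega> ustar - gradF ustar) w\<bar> \<le> eps * norm (iU w)" for w
      using sample_grad_error by (simp add: eps_def)
  qed (use growth_psi_real gradF_lipschitz[OF u] in auto)
  also have "\<dots> \<le> growth_lipschitz_constant * eps\<^sup>2"
    unfolding growth_lipschitz_constant_def
    using criticality_constant_le[OF theta_pos L_nonneg] by (rule mult_right_mono) simp
  finally show "ereal (inner (adj B (DFexp P xi Dwf (B (uN N \<omega>)))) (uN N \<omega> - v)) + psi (uN N \<omega>) - psi v
      \<le> ereal (growth_lipschitz_constant * CH\<^sup>2 * (norm (hg_sample_mean N \<omega> - hg_mean))\<^sup>2)"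
    using u v by (simp add: u_def eps_def gradF_def psi_eq_psi_real power_mult_distrib mult.assoc)
qed

lemma expected_gap_le_expected_Psi_crit:
  assumes "N \<ge> 1"
  shows "(\<integral>\<^sup>+\<omega>. e2ennreal (Gobj P xi f B psi (uN N \<omega>) - Gobj P xi f B psi ustar) \<partial>P)
    \<le> (\<integral>\<^sup>+\<omega>. e2ennreal (Psi_crit P xi Dwf B psi (uN N \<omega>)) \<partial>P)"
  using Gobj_gap_le_Psi_crit[OF uN_edom[OF assms] ustar_edom]
  by (intro nn_integral_mono e2ennreal_mono)

lemma expected_Psi_crit_le:
  assumes N: "N \<ge> 1"
  shows "(\<integral>\<^sup>+\<omega>. e2ennreal (Psi_crit P xi Dwf B psi (uN N \<omega>)) \<partial>P)
    \<le> ennreal (growth_lipschitz_constant * CH\<^sup>2 * hg_variance / N)"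
proof -
  define K where "K = growth_lipschitz_constant * CH\<^sup>2"
  have "K \<ge> 0" unfolding K_def growth_lipschitz_constant_def using theta_pos
    by (intro mult_nonneg_nonneg add_nonneg_nonneg) auto
  have "(\<integral>\<^sup>+\<omega>. e2ennreal (Psi_crit P xi Dwf B psi (uN N \<omega>)) \<partial>P)
      \<le> (\<integral>\<^sup>+\<omega>. ennreal (K * (norm (hg_sample_mean N \<omega> - hg_mean))\<^sup>2) \<partial>P)"
    using Psi_crit_uN_le[OF N] e2ennreal_mono
    by (intro nn_integral_mono) (metis K_def e2ennreal_ereal mult.assoc)
  also have "\<dots> = ennreal (\<integral>\<omega>. K * (norm (hg_sample_mean N \<omega> - hg_mean))\<^sup>2 \<partial>P)"
    using hg_sample_mean_mean_square_error(1)[OF N] \<open>K \<ge> 0\<close> by (intro nn_integral_eq_integral) auto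
  also have "\<dots> = ennreal (K * hg_variance / N)"
    by (simp add: hg_sample_mean_mean_square_error(2)[OF N])
  finally show ?thesis by (simp add: K_def)
qed

end

theorem corollary3p12:
  fixes P :: "'om measure"
    and xi :: "'om \<Rightarrow> 'x::polish_space"
    and xis :: "nat \<Rightarrow> 'om \<Rightarrow> 'x"
    and B :: "'u::{real_inner, polish_space} \<Rightarrow> 'w::{banach, second_countable_topology}"
    and psi :: "'u \<Rightarrow> ereal"
    and U0 :: "'u set"
    and f :: "'w \<Rightarrow> 'x \<Rightarrow> real"
    and zf :: "'x \<Rightarrow> real"
    and Dg :: "'x \<Rightarrow> 'u \<Rightarrow> 'u"
    and Dwf :: "'w \<Rightarrow> 'x \<Rightarrow> ('w \<Rightarrow>\<^sub>L real)"
    and zD :: "'x \<Rightarrow> real"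
    and ustar :: "'u"
    and uN :: "nat \<Rightarrow> 'om \<Rightarrow> 'u"
    and iU :: "'u \<Rightarrow> 'UU::banach"
    and jV :: "('UU \<Rightarrow>\<^sub>L real) \<Rightarrow> 'u"
    and kH :: "'h::{real_inner, polish_space} \<Rightarrow> ('UU \<Rightarrow>\<^sub>L real)"
    and CH :: real
    and theta :: real
    and hg :: "'x \<Rightarrow> 'h"
    and sigma :: real
    and L :: real
  assumes \<comment> \<open>probability setting: complete probability space, xi^1, xi^2, ... iid copies of xi\<close>
    prob: "prob_space P" and complete: "complete_measure P"
    and xi_meas: "xi \<in> measurable P borel"
    and xis_meas: "\<And>i. i \<ge> 1 \<Longrightarrow> xis i \<in> measurable P borel"
    and xis_indep: "prob_space.indep_vars P (\<lambda>_. borel) xis {1..}"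
    and xis_distr: "\<And>i. i \<ge> 1 \<Longrightarrow> distr P borel (xis i) = distr P borel xi"
    \<comment> \<open>B compact linear; psi proper closed convex, values in [0,\<infinity>], bounded domain\<close>
    and B_compact: "compact_operator B"
    and psi_pcc: "proper_closed_convex psi"
    and psi_nonneg: "\<And>u. psi u \<ge> 0"
    and dom_bounded: "bounded (edom psi)"
    and U0: "open U0" "convex U0" "bounded U0" "edom psi \<subseteq> U0"
    \<comment> \<open>integrand f\<close>
    and f_cont: "\<And>x. continuous_on (B ` edom psi) (\<lambda>w. f w x)"
    and f_meas: "\<And>w. w \<in> B ` U0 \<Longrightarrow> (\<lambda>x. f w x) \<in> borel_measurable borel"
    and f_bound: "\<And>u x. u \<in> U0 \<Longrightarrow> \<bar>f (B u) x\<bar> \<le> zf x"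
    and zf_int: "integrable (distr P borel xi) zf"
    and g_diff: "\<And>x u. u \<in> U0 \<Longrightarrow> ((\<lambda>v. f (B v) x) has_derivative (\<lambda>h. inner (Dg x u) h)) (at u)"
    and g_C1: "\<And>x. continuous_on U0 (Dg x)"
    and Dwf_cont: "\<And>x. continuous_on (B ` edom psi) (\<lambda>w. Dwf w x)"
    and Dwf_meas: "\<And>w. w \<in> B ` edom psi \<Longrightarrow> (\<lambda>x. Dwf w x) \<in> borel_measurable borel"
    and Dg_Dwf: "\<And>x u. u \<in> edom psi \<Longrightarrow> Dg x u = adj B (Dwf (B u) x)"
    and Dg_bound: "\<And>x u. u \<in> U0 \<Longrightarrow> norm (Dg x u) \<le> zD x"
    and Dwf_bound: "\<And>x u. u \<in> edom psi \<Longrightarrow> norm (Dwf (B u) x) \<le> zD x"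
    and zD_int: "integrable (distr P borel xi) zD"
    \<comment> \<open>u* solves min G, u_N* measurable solutions of the SAA problems\<close>
    and ustar_opt: "\<And>u. Gobj P xi f B psi ustar \<le> Gobj P xi f B psi u"
    and uN_meas: "\<And>N. N \<ge> 1 \<Longrightarrow> uN N \<in> measurable P borel"
    and uN_opt: "\<And>N om u. N \<ge> 1 \<Longrightarrow>
        ereal (Fhat N xis f (B (uN N om)) om) + psi (uN N om) \<le> ereal (Fhat N xis f (B u) om) + psi u"
    \<comment> \<open>spaces \<U>* \<hookrightarrow> U \<hookrightarrow> \<U>, \<H> \<hookrightarrow> \<U>* (continuous linear injective embeddings)\<close>
    and iU_emb: "bounded_linear iU" "inj iU"
    and jV_emb: "bounded_linear jV" "inj jV"
    and kH_emb: "bounded_linear kH" "inj kH"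
    and kH_const: "\<And>h. norm (kH h) \<le> CH * norm h"
    and pairing: "\<And>v u. \<bar>inner (jV v) u\<bar> \<le> norm v * norm (iU u)"
    \<comment> \<open>quadratic growth condition\<close>
    and theta_pos: "theta > 0"
    and growth: "\<And>u. ereal (inner (adj B (DFexp P xi Dwf (B ustar))) (u - ustar)) + psi u - psi ustar
                   \<ge> ereal (theta * (norm (iU (u - ustar)))\<^sup>2)"
    \<comment> \<open>gradient at u* is \<H>-valued, integrable, with finite variance sigma^2\<close>
    and hg_repr: "\<And>x. jV (kH (hg x)) = Dg x ustar"
    and hg_int: "integrable (distr P borel xi) hg"
    and hg_var: "integrable P (\<lambda>om. (norm (hg (xi om) - (\<integral>om'. hg (xi om') \<partial>P)))\<^sup>2)"
    and sigma_def: "sigma = sqrt (\<integral>om. (norm (hg (xi om) - (\<integral>om'. hg (xi om') \<partial>P)))\<^sup>2 \<partial>P)"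
    \<comment> \<open>hypotheses of the corollary: convexity of f(.,xi) and \<U>-Lipschitz gradients\<close>
    and f_convex: "\<And>x. convex_on (B ` U0) (\<lambda>w. f w x)"
    and L_pos: "L > 0"
    and grad_lip: "\<And>x u1 u2. u1 \<in> edom psi \<Longrightarrow> u2 \<in> edom psi \<Longrightarrow>
        \<exists>v. jV v = Dg x u2 - Dg x u1 \<and> norm v \<le> L * norm (iU (u2 - u1))"
  shows "\<forall>N\<ge>1.
     (\<integral>\<^sup>+om. e2ennreal (Gobj P xi f B psi (uN N om) - Gobj P xi f B psi ustar) \<partial>P)
       \<le> (\<integral>\<^sup>+om. e2ennreal (Psi_crit P xi Dwf B psi (uN N om)) \<partial>P)
   \<and> (\<integral>\<^sup>+om. e2ennreal (Psi_crit P xi Dwf B psi (uN N om)) \<partial>P)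
       \<le> ennreal ((1 + (1 / theta + L / theta\<^sup>2)\<^sup>2 + 4 * L\<^sup>2 / theta\<^sup>2) * CH\<^sup>2 * sigma\<^sup>2 / real N)"
proof -
  have B_linear: "bounded_linear B" using B_compact by (simp add: compact_operator_def)
  have iU_linear: "linear iU" using iU_emb(1) by (rule bounded_linear.linear)
  have L_nonneg: "L \<ge> 0" using L_pos by simp
  interpret saa_problem P xi B psi U0 f zf Dg Dwf zD xis ustar uN iU jV kH CH theta hg L
    by (intro saa_problem.intro composite_stochastic_problem.intro
        composite_stochastic_problem_axioms.intro saa_problem_axioms.intro)
      (fact assms B_linear iU_linear L_nonneg)+
  have "sigma\<^sup>2 = hg_variance"
    by (simp add: sigma_def hg_variance_def hg_mean_def)
  then show ?thesis
    using expected_gap_le_expected_Psi_crit expected_Psi_crit_le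
    by (simp add: growth_lipschitz_constant_def)
qed

end
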